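(* Let $\Sigma$ be a finite alphabet. For every unranked ordered $\Sigma$-labeled tree $t$ with $|t|\ge 2$, $\frac12|\mathrm{bdag}(t)| \le |\mathrm{dag}(t)| \le \frac12 |\mathrm{bdag}(t)|^2$.
   Context: An unranked tree over $\Sigma$ is a finite rooted tree with nodes labeled in $\Sigma$ and linearly ordered children; $|t|$ is its number of edges. $\mathrm{dag}(t)$ is the minimal dag of $t$: its nodes are the distinct subtrees of $t$, the node of a subtree $f(s_1,\dots,s_k)$ having $k$ ordered edges to the nodes of $s_1,\dots,s_k$; $|\mathrm{dag}(t)|$ is its number of edges. The first-child/next-sibling encoding $\mathrm{fcns}(t)$ is the binary tree (optional left and right child at each node) on the nodes of $t$ in which the left child of $u$ is the first child of $u$ in $t$ and the right child of $u$ is the next sibling of $u$ in $t$ (when these exist). $\mathrm{bdag}(t)$ is the minimal dag of $\mathrm{fcns}(t)$ (identical subtrees merged), and $|\mathrm{bdag}(t)|$ its number of edges, not counting edges to absent children. *)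

theory Defs
  imports Complex_Main "HOL-Library.Tree"
begin

datatype 'a utree = UNode 'a "'a utree list"

fun ulabel :: "'a utree \<Rightarrow> 'a" where
  "ulabel (UNode a ts) = a"

fun uchildren :: "'a utree \<Rightarrow> 'a utree list" where
  "uchildren (UNode a ts) = ts"

fun unodes :: "'a utree \<Rightarrow> nat" where
  "unodes (UNode a ts) = 1 + sum_list (map unodes ts)"

definition uedges :: "'a utree \<Rightarrow> nat" where
  "uedges t = unodes t - 1"

fun usubtrees :: "'a utree \<Rightarrow> 'a utree set" where
  "usubtrees (UNode a ts) = insert (UNode a ts) (\<Union>s\<in>set ts. usubtrees s)"

text \<open>Edges of the minimal dag: each distinct subtree f(s1..sk) contributes k edges.\<close>
definition dag_size :: "'a utree \<Rightarrow> nat" where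
  "dag_size t = (\<Sum>s\<in>usubtrees t. length (uchildren s))"

text \<open>First-child/next-sibling encoding of a forest (list of siblings)
  into a binary tree: left child = first child, right child = next sibling.\<close>
fun fcns_forest :: "'a utree list \<Rightarrow> 'a tree" where
  "fcns_forest [] = Leaf"
| "fcns_forest (UNode a ts # rest) = Node (fcns_forest ts) a (fcns_forest rest)"

definition fcns :: "'a utree \<Rightarrow> 'a tree" where
  "fcns t = fcns_forest [t]"

text \<open>Distinct (nonempty) subtrees of a binary tree = nodes of its minimal dag.\<close>
definition bsubtrees :: "'a tree \<Rightarrow> 'a tree set" where
  "bsubtrees b = subtrees b - {Leaf}"

text \<open>Edges of the minimal dag of a binary tree, not counting absent children.\<close>
fun present_children :: "'a tree \<Rightarrow> nat" where
  "present_children Leaf = 0"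
| "present_children (Node l a r) =
     (if l = Leaf then 0 else 1) + (if r = Leaf then 0 else 1)"

definition bdag_size :: "'a utree \<Rightarrow> nat" where
  "bdag_size t = (\<Sum>s\<in>bsubtrees (fcns t). present_children s)"

end

theory Submission
  imports Defs
begin

text \<open>The nodes of the binary dag are the distinct nonempty sibling suffixes of the tree
  (\<open>[t]\<close> and the nonempty suffixes of child lists); a suffix has a left edge iff its head has
  children and a right edge iff it has at least two elements. Counting suffixes per child list
  gives \<open>L + R \<le> 2 |dag(t)|\<close> for the numbers \<open>L, R\<close> of left and right edges. Conversely,
  the heads of the suffixes with a left edge are exactly the inner subtrees, so there are at
  most \<open>L\<close> of them, and each has at most \<open>R + 1\<close> children; hence
  \<open>|dag(t)| \<le> L (R + 1) \<le> (L + R)\<^sup>2 / 2\<close> as soon as \<open>L + R \<ge> 2\<close>.\<close>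

definition nonempty_suffixes :: "'a list \<Rightarrow> 'a list set" where
  "nonempty_suffixes xs = (\<lambda>i. drop i xs) ` {..<length xs}"

lemma nonempty_suffixes_Nil [simp]: "nonempty_suffixes [] = {}"
  by (simp add: nonempty_suffixes_def)

lemma nonempty_suffixes_Cons:
  "nonempty_suffixes (x # xs) = insert (x # xs) (nonempty_suffixes xs)"
  by (simp add: nonempty_suffixes_def lessThan_Suc_eq_insert_0 image_image)

lemma finite_nonempty_suffixes [simp]: "finite (nonempty_suffixes xs)"
  by (simp add: nonempty_suffixes_def)

lemma length_le_if_nonempty_suffix: "l \<in> nonempty_suffixes xs \<Longrightarrow> length l \<le> length xs"
  by (auto simp: nonempty_suffixes_def)

lemma card_nonempty_suffixes_with_tl:
  "card {l \<in> nonempty_suffixes xs. tl l \<noteq> []} = length xs - 1"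
proof (induction xs)
  case (Cons x xs)
  show ?case
  proof (cases "xs = []")
    case False
    have "x # xs \<notin> nonempty_suffixes xs"
      using length_le_if_nonempty_suffix by fastforce
    with False have "{l \<in> nonempty_suffixes (x # xs). tl l \<noteq> []}
        = insert (x # xs) {l \<in> nonempty_suffixes xs. tl l \<noteq> []}"
      and "x # xs \<notin> {l \<in> nonempty_suffixes xs. tl l \<noteq> []}"
      by (auto simp: nonempty_suffixes_Cons)
    with Cons.IH False show ?thesis by simp
  qed (simp add: nonempty_suffixes_Cons)
qed simp

text \<open>\<open>fcns_forest\<close> maps these lists bijectively onto the nonempty subtrees of the
  encoding, i.e. onto the nodes of the binary dag.\<close>
fun sibling_suffixes :: "'a utree list \<Rightarrow> 'a utree list set" where
  "sibling_suffixes [] = {}"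
| "sibling_suffixes (UNode a cs # rest) =
     insert (UNode a cs # rest) (sibling_suffixes cs \<union> sibling_suffixes rest)"

lemma sibling_suffixes_eq:
  "sibling_suffixes ts = nonempty_suffixes ts \<union>
     (\<Union>u\<in>set ts. \<Union>s\<in>usubtrees u. nonempty_suffixes (uchildren s))"
  by (induction ts rule: sibling_suffixes.induct) (auto simp: nonempty_suffixes_Cons)

lemma sibling_suffixes_single:
  "sibling_suffixes [t] = insert [t] (\<Union>s\<in>usubtrees t. nonempty_suffixes (uchildren s))"
  by (simp add: sibling_suffixes_eq nonempty_suffixes_Cons)

lemma hd_sibling_suffixes: "hd ` sibling_suffixes ts = (\<Union>u\<in>set ts. usubtrees u)"
  by (induction ts rule: sibling_suffixes.induct) auto

lemma Nil_notin_sibling_suffixes: "[] \<notin> sibling_suffixes ts"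
  by (induction ts rule: sibling_suffixes.induct) auto

lemma finite_sibling_suffixes [simp]: "finite (sibling_suffixes ts)"
  by (induction ts rule: sibling_suffixes.induct) auto

lemma fcns_forest_eq_Leaf_iff [simp]: "fcns_forest ts = Leaf \<longleftrightarrow> ts = []"
  by (cases ts rule: fcns_forest.cases) auto

lemma inj_fcns_forest: "inj fcns_forest"
proof (rule injI)
  show "fcns_forest xs = fcns_forest ys \<Longrightarrow> xs = ys" for xs ys :: "'a utree list"
  proof (induction xs arbitrary: ys rule: fcns_forest.induct)
    case (2 a ts rest)
    then show ?case by (cases ys rule: fcns_forest.cases) auto
  qed (metis fcns_forest_eq_Leaf_iff)
qed

lemma subtrees_fcns_forest:
  "subtrees (fcns_forest ts) = insert Leaf (fcns_forest ` sibling_suffixes ts)"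
  by (induction ts rule: sibling_suffixes.induct) auto

lemma bsubtrees_fcns: "bsubtrees (fcns t) = fcns_forest ` sibling_suffixes [t]"
  unfolding bsubtrees_def fcns_def subtrees_fcns_forest
  using Nil_notin_sibling_suffixes by fastforce

definition bdag_left_edges :: "'a utree \<Rightarrow> nat" where
  "bdag_left_edges t = card {l \<in> sibling_suffixes [t]. uchildren (hd l) \<noteq> []}"

definition bdag_right_edges :: "'a utree \<Rightarrow> nat" where
  "bdag_right_edges t = card {l \<in> sibling_suffixes [t]. tl l \<noteq> []}"

lemma present_children_fcns_forest_Cons:
  "present_children (fcns_forest (u # us)) =
     (if uchildren u \<noteq> [] then 1 else 0) + (if us \<noteq> [] then 1 else 0)"
  by (cases u) simp

lemma bdag_size_eq: "bdag_size t = bdag_left_edges t + bdag_right_edges t"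
proof -
  let ?S = "sibling_suffixes [t]"
  have "bdag_size t = (\<Sum>l\<in>?S. present_children (fcns_forest l))"
    unfolding bdag_size_def bsubtrees_fcns
    using sum.reindex[OF inj_on_subset[OF inj_fcns_forest subset_UNIV]] by simp
  also have "\<dots> = (\<Sum>l\<in>?S. (if uchildren (hd l) \<noteq> [] then 1 else 0) + (if tl l \<noteq> [] then 1 else 0))"
  proof (rule sum.cong[OF refl])
    fix l assume "l \<in> ?S"
    then obtain u us where "l = u # us"
      using Nil_notin_sibling_suffixes by (metis neq_Nil_conv)
    then show "present_children (fcns_forest l) =
        (if uchildren (hd l) \<noteq> [] then 1 else 0) + (if tl l \<noteq> [] then 1 else 0)"
      by (simp add: present_children_fcns_forest_Cons)
  qed
  also have "\<dots> = bdag_left_edges t + bdag_right_edges t"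
    unfolding sum.distrib bdag_left_edges_def bdag_right_edges_def
    by (simp add: sum.If_cases Int_def)
  finally show ?thesis .
qed

lemma finite_usubtrees [simp]: "finite (usubtrees t)"
  by (induction t) auto

lemma usubtrees_self: "t \<in> usubtrees t"
  by (cases t) auto

lemma card_sibling_suffixes_le: "card (sibling_suffixes [t]) \<le> dag_size t + 1"
proof -
  have "card (sibling_suffixes [t]) \<le> card (\<Union>s\<in>usubtrees t. nonempty_suffixes (uchildren s)) + 1"
    unfolding sibling_suffixes_single by (simp add: card_insert_le_m1)
  also have "\<dots> \<le> (\<Sum>s\<in>usubtrees t. card (nonempty_suffixes (uchildren s))) + 1"
    by (simp add: card_UN_le)
  also have "\<dots> \<le> dag_size t + 1"
    unfolding dag_size_def nonempty_suffixes_def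
    by (intro add_right_mono sum_mono) (metis card_image_le card_lessThan finite_lessThan)
  finally show ?thesis .
qed

lemma bdag_right_edges_le: "bdag_right_edges t \<le> (\<Sum>s\<in>usubtrees t. length (uchildren s) - 1)"
proof -
  have "{l \<in> sibling_suffixes [t]. tl l \<noteq> []}
      = (\<Union>s\<in>usubtrees t. {l \<in> nonempty_suffixes (uchildren s). tl l \<noteq> []})"
    unfolding sibling_suffixes_single by auto
  then have "bdag_right_edges t
      \<le> (\<Sum>s\<in>usubtrees t. card {l \<in> nonempty_suffixes (uchildren s). tl l \<noteq> []})"
    unfolding bdag_right_edges_def by (simp add: card_UN_le)
  then show ?thesis by (simp add: card_nonempty_suffixes_with_tl)
qed

lemma bdag_size_le_twice_dag_size: "bdag_size t \<le> 2 * dag_size t"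
proof (cases "uchildren t = []")
  case True
  then obtain a where "t = UNode a []" by (cases t) auto
  then show ?thesis by (simp add: bdag_size_def fcns_def bsubtrees_def)
next
  case False
  have "bdag_left_edges t \<le> card (sibling_suffixes [t])"
    unfolding bdag_left_edges_def by (intro card_mono) auto
  with card_sibling_suffixes_le[of t] have left: "bdag_left_edges t \<le> dag_size t + 1"
    by linarith
  have "(\<Sum>s\<in>usubtrees t. length (uchildren s) - 1) < dag_size t"
    unfolding dag_size_def
    using False usubtrees_self[of t] by (intro sum_strict_mono_ex1) (auto intro!: bexI[of _ t])
  with bdag_right_edges_le have "bdag_right_edges t < dag_size t"
    by (rule le_less_trans)
  with left show ?thesis by (simp add: bdag_size_eq)
qed

lemma card_inner_usubtrees_le:
  "card {s \<in> usubtrees t. uchildren s \<noteq> []} \<le> bdag_left_edges t"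
proof -
  have "{s \<in> usubtrees t. uchildren s \<noteq> []}
      = hd ` {l \<in> sibling_suffixes [t]. uchildren (hd l) \<noteq> []}"
    using hd_sibling_suffixes[of "[t]"] by auto
  then show ?thesis
    unfolding bdag_left_edges_def by (simp add: card_image_le)
qed

lemma length_uchildren_le:
  assumes "s \<in> usubtrees t"
  shows "length (uchildren s) \<le> bdag_right_edges t + 1"
proof -
  have "{l \<in> nonempty_suffixes (uchildren s). tl l \<noteq> []} \<subseteq> {l \<in> sibling_suffixes [t]. tl l \<noteq> []}"
    using assms unfolding sibling_suffixes_single by auto
  then have "card {l \<in> nonempty_suffixes (uchildren s). tl l \<noteq> []} \<le> bdag_right_edges t"
    unfolding bdag_right_edges_def by (intro card_mono) auto
  then show ?thesis by (simp add: card_nonempty_suffixes_with_tl)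
qed

lemma dag_size_le_left_right: "dag_size t \<le> bdag_left_edges t * (bdag_right_edges t + 1)"
proof -
  let ?N = "{s \<in> usubtrees t. uchildren s \<noteq> []}"
  have "dag_size t = (\<Sum>s\<in>?N. length (uchildren s))"
    unfolding dag_size_def by (intro sum.mono_neutral_right) auto
  also have "\<dots> \<le> (\<Sum>s\<in>?N. bdag_right_edges t + 1)"
    by (intro sum_mono length_uchildren_le) simp
  also have "\<dots> = card ?N * (bdag_right_edges t + 1)"
    by simp
  also have "\<dots> \<le> bdag_left_edges t * (bdag_right_edges t + 1)"
    using card_inner_usubtrees_le by (rule mult_le_mono1)
  finally show ?thesis .
qed

lemma two_mult_le_square_add:
  fixes l r :: nat
  assumes "2 \<le> l + r"
  shows "2 * (l * (r + 1)) \<le> (l + r)\<^sup>2"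
proof -
  have "2 * l \<le> l * l + r * r"
  proof (cases "2 \<le> l")
    case True
    then have "2 * l \<le> l * l" by simp
    then show ?thesis by linarith
  next
    case False
    with assms have "l \<le> 1" "1 \<le> r" by auto
    then show ?thesis by (cases l) auto
  qed
  then show ?thesis by (simp add: power2_eq_square algebra_simps)
qed

lemma two_le_bdag_size:
  assumes "2 \<le> uedges t"
  shows "2 \<le> bdag_size t"
proof -
  obtain a ts where t: "t = UNode a ts" by (cases t)
  let ?N = "{s \<in> usubtrees t. uchildren s \<noteq> []}"
  have finN: "finite ?N" by simp
  from assms obtain c cs where ts: "ts = c # cs"
    unfolding t uedges_def by (cases ts) auto
  then have "t \<in> ?N" using usubtrees_self[of t] t by simp
  have "uchildren c \<noteq> []" if "cs = []"
    using assms unfolding t ts that uedges_def by (cases c) auto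
  then consider "cs \<noteq> []" | "cs = []" "uchildren c \<noteq> []"
    by blast
  then show ?thesis
  proof cases
    case 1
    then have "1 \<le> bdag_right_edges t"
      using length_uchildren_le[OF usubtrees_self[of t]] t ts by (cases cs) auto
    moreover have "1 \<le> bdag_left_edges t"
      using card_inner_usubtrees_le[of t] card_mono[OF finN, of "{t}"] \<open>t \<in> ?N\<close> by simp
    ultimately show ?thesis by (simp add: bdag_size_eq)
  next
    case 2
    then have "c \<in> ?N"
      using usubtrees_self[of c] t ts by auto
    have "unodes c < unodes t"
      using t ts by simp
    then have "c \<noteq> t" by blast
    have "card {t, c} \<le> card ?N"
      using \<open>t \<in> ?N\<close> \<open>c \<in> ?N\<close> by (intro card_mono) auto
    then show ?thesis
      using card_inner_usubtrees_le[of t] \<open>c \<noteq> t\<close> by (simp add: bdag_size_eq)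
  qed
qed

lemma twice_dag_size_le_square:
  assumes "2 \<le> bdag_size t"
  shows "2 * dag_size t \<le> (bdag_size t)\<^sup>2"
  using dag_size_le_left_right[of t] two_mult_le_square_add[of "bdag_left_edges t" "bdag_right_edges t"]
    assms by (simp add: bdag_size_eq)

theorem corollary1:
  fixes t :: "'a::finite utree"
  assumes "uedges t \<ge> 2"
  shows "real (bdag_size t) / 2 \<le> real (dag_size t) \<and>
         real (dag_size t) \<le> real (bdag_size t) ^ 2 / 2"
proof -
  have "bdag_size t \<le> 2 * dag_size t"
    by (rule bdag_size_le_twice_dag_size)
  moreover have "2 * dag_size t \<le> (bdag_size t)\<^sup>2"
    using assms by (intro twice_dag_size_le_square two_le_bdag_size)
  ultimately have "real (bdag_size t) \<le> 2 * real (dag_size t)"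
    and "2 * real (dag_size t) \<le> real (bdag_size t) ^ 2"
    by (simp_all add: of_nat_le_iff[symmetric, where 'a = real])
  then show ?thesis by simp
qed

end
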